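(* Let $X\subset\mathbb CP(n)$ be an algebraic subset defined as the common zero set of $k$ homogeneous polynomials in $\mathbb C^{n+1}$. Then $M=\mathbb CP(n)\setminus X$ admits an $\ell$-strictly plurisubharmonic exhaustion, where $\ell=n-k+1$. In particular, if $X$ is an algebraic hypersurface then $\mathbb CP(n)\setminus X$ is a Stein manifold.
   Context: For a $C^2$ function $f\colon M\to\mathbb R$ on a complex manifold, the Levi form $L_f(p)$ is the Hermitian quadratic form on $T_pM$ given in local coordinates by $\sum_{i,j}\frac{\partial^2 f}{\partial z_i\partial\bar z_j}(p)\,w_i\bar w_j$. $f$ is $\ell$-strictly plurisubharmonic if for every $p\in M$ there is a complex subspace $E\subset T_pM$ of dimension $\ell$ with $L_f(p)(v)>0$ for all $v\in E\setminus\{0\}$. An exhaustion of $M$ is a continuous function $g\colon M\to\mathbb R$ bounded from below and proper (i.e. $g(p_n)\to+\infty$ for every sequence $p_n$ without accumulation point in $M$). A Stein manifold is a complex manifold admitting a $C^\infty$ strictly plurisubharmonic (i.e. $(\dim M)$-strictly plurisubharmonic) exhaustion. *)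

theory Defs
  imports "HOL-Analysis.Analysis"
begin

text \<open>Complex projective space CP(n) is modelled through homogeneous coordinates:
  points of C^{n+1} are vectors of type complex^'m with CARD('m) = n+1, and
  real functions on open subsets of CP(n) are modelled by their lifts to the
  corresponding C^*-invariant cones in C^{n+1}.\<close>

fun Ck :: "nat \<Rightarrow> 'a::euclidean_space set \<Rightarrow> ('a \<Rightarrow> real) \<Rightarrow> bool" where
  "Ck 0 S f = continuous_on S f"
| "Ck (Suc k) S f = (f differentiable_on S \<and>
      (\<forall>b\<in>Basis. Ck k S (\<lambda>x. frechet_derivative f (at x) b)))"

definition smooth_fun :: "'a::euclidean_space set \<Rightarrow> ('a \<Rightarrow> real) \<Rightarrow> bool" where
  "smooth_fun S f = (\<forall>k. Ck k S f)"

definition dderiv :: "('a::real_normed_vector \<Rightarrow> real) \<Rightarrow> 'a \<Rightarrow> 'a \<Rightarrow> real" where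
  "dderiv f v x = frechet_derivative f (at x) v"

text \<open>Second Wirtinger derivative d^2 f / (dz_i d(conj z_j)) at x, where
  z_i = x_i + i y_i, written via real partial derivatives.\<close>
definition wirt2 :: "(complex^'m \<Rightarrow> real) \<Rightarrow> 'm \<Rightarrow> 'm \<Rightarrow> complex^'m \<Rightarrow> complex" where
  "wirt2 f i j x =
     (complex_of_real (dderiv (dderiv f (axis j 1)) (axis i 1) x
                     + dderiv (dderiv f (axis j \<i>)) (axis i \<i>) x)
      + \<i> * complex_of_real (dderiv (dderiv f (axis j \<i>)) (axis i 1) x
                     - dderiv (dderiv f (axis j 1)) (axis i \<i>) x)) / 4"

text \<open>Levi form of f at x evaluated at w (a real number, returned as complex).\<close>
definition levi_form :: "(complex^'m \<Rightarrow> real) \<Rightarrow> complex^'m \<Rightarrow> complex^'m \<Rightarrow> complex" where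
  "levi_form f x w = (\<Sum>i\<in>UNIV. \<Sum>j\<in>UNIV. wirt2 f i j x * w$i * cnj (w$j))"

definition homog_poly :: "nat \<Rightarrow> (complex^'m \<Rightarrow> complex) \<Rightarrow> bool" where
  "homog_poly d p = (\<exists>c :: ('m \<Rightarrow> nat) \<Rightarrow> complex.
     \<forall>z. p z = (\<Sum>\<alpha>\<in>{\<alpha>::'m\<Rightarrow>nat. (\<Sum>i\<in>UNIV. \<alpha> i) = d}. c \<alpha> * (\<Prod>i\<in>UNIV. (z$i) ^ \<alpha> i)))"

text \<open>Cone over CP(n) \ X, X = common zero set of P 0, ..., P (k-1).\<close>
definition compl_cone :: "nat \<Rightarrow> (nat \<Rightarrow> complex^'m \<Rightarrow> complex) \<Rightarrow> (complex^'m) set" where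
  "compl_cone k P = {z. z \<noteq> 0 \<and> \<not> (\<forall>i<k. P i z = 0)}"

text \<open>f (lifted to the C^*-invariant cone U) is a function on the projectivization of U.\<close>
definition proj_invariant :: "(complex^'m) set \<Rightarrow> (complex^'m \<Rightarrow> real) \<Rightarrow> bool" where
  "proj_invariant U f = (\<forall>z\<in>U. \<forall>c::complex. c \<noteq> 0 \<longrightarrow> f (c *s z) = f z)"

text \<open>l-strict plurisubharmonicity on the projectivization of U, via the lift:
  the Levi form of the lift is the pullback of the Levi form on CP(n) under
  the projection, whose kernel is the line C z.\<close>
definition strictly_psh :: "nat \<Rightarrow> (complex^'m) set \<Rightarrow> (complex^'m \<Rightarrow> real) \<Rightarrow> bool" where
  "strictly_psh l U f = (\<forall>z\<in>U. \<exists>E. vec.subspace E \<and> vec.dim E = l \<and>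
      (\<forall>v\<in>E. v \<noteq> 0 \<longrightarrow> Re (levi_form f z v) > 0))"

text \<open>A sequence in P(U) has no accumulation point in P(U) iff its unit-norm
  representatives have no convergent subsequence with limit in U.\<close>
definition proj_exhaustion :: "(complex^'m) set \<Rightarrow> (complex^'m \<Rightarrow> real) \<Rightarrow> bool" where
  "proj_exhaustion U f = (continuous_on U f \<and> (\<exists>b. \<forall>z\<in>U. b \<le> f z) \<and>
     (\<forall>s::nat \<Rightarrow> complex^'m. (\<forall>n. s n \<in> U \<and> norm (s n) = 1) \<longrightarrow>
        \<not> (\<exists>w\<in>U. \<exists>r. strict_mono r \<and> (s \<circ> r) \<longlonglongrightarrow> w) \<longrightarrow>
        filterlim (\<lambda>n. f (s n)) at_top sequentially))"

end

theory Submission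
  imports Defs "HOL-Complex_Analysis.Cauchy_Integral_Formula"
begin

text \<open>Raise the generators to a common degree D, Q_i = P_i^(D/d_i), and put
  F(z) = D log |z|^2 - log (\<Sum>_i |Q_i(z)|^2). Both terms scale in the same way under
  z \<mapsto> c z, so F lives on CP(n) minus X; on the unit sphere F = - log (\<Sum>_i |Q_i|^2),
  which tends to +\<infinity> exactly when one approaches X, so F is an exhaustion. The Levi form
  of D log |z|^2 is D times the Fubini-Study form, positive on every direction that is not
  complex-proportional to z (strict Cauchy-Schwarz). On the common kernel of the complex
  differentials dQ_i(z) the Levi form of log (\<Sum>_i |Q_i|^2) vanishes: the first derivatives
  drop out and the remaining term Re(conj(Q_i) Q_i'') changes sign under w \<mapsto> i w. That
  kernel has codimension at most k and, by Euler's identity dQ_i(z) z = D Q_i(z), does not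
  contain z. Finally F is built from the coordinates by field operations and logarithms,
  hence smooth.\<close>

section \<open>Functions built from coordinates by field operations and logarithms\<close>

inductive_set log_rational :: "'a::euclidean_space set \<Rightarrow> ('a \<Rightarrow> real) set" for S where
  const: "(\<lambda>x. c) \<in> log_rational S"
| inner: "(\<lambda>x. x \<bullet> b) \<in> log_rational S"
| add: "f \<in> log_rational S \<Longrightarrow> g \<in> log_rational S \<Longrightarrow> (\<lambda>x. f x + g x) \<in> log_rational S"
| mult: "f \<in> log_rational S \<Longrightarrow> g \<in> log_rational S \<Longrightarrow> (\<lambda>x. f x * g x) \<in> log_rational S"
| inverse: "f \<in> log_rational S \<Longrightarrow> (\<forall>x\<in>S. f x \<noteq> 0) \<Longrightarrow> (\<lambda>x. inverse (f x)) \<in> log_rational S"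
| ln: "f \<in> log_rational S \<Longrightarrow> (\<forall>x\<in>S. f x > 0) \<Longrightarrow> (\<lambda>x. ln (f x)) \<in> log_rational S"

lemma log_rational_minus: "f \<in> log_rational S \<Longrightarrow> (\<lambda>x. - f x) \<in> log_rational S"
  using log_rational.mult[OF log_rational.const[of "-1"], of f] by simp

lemma log_rational_diff:
  "f \<in> log_rational S \<Longrightarrow> g \<in> log_rational S \<Longrightarrow> (\<lambda>x. f x - g x) \<in> log_rational S"
  using log_rational.add[OF _ log_rational_minus, of f S g] by simp

lemma log_rational_sum:
  "(\<And>i. i \<in> I \<Longrightarrow> g i \<in> log_rational S) \<Longrightarrow> (\<lambda>x. \<Sum>i\<in>I. g i x) \<in> log_rational S"
proof (induction I rule: infinite_finite_induct)
  case (insert a F)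
  then show ?case using log_rational.add[of "g a" S "\<lambda>x. \<Sum>i\<in>F. g i x"] by simp
qed (use log_rational.const[of 0] in simp_all)

lemma log_rational_power: "f \<in> log_rational S \<Longrightarrow> (\<lambda>x. f x ^ n) \<in> log_rational S"
proof (induction n)
  case (Suc n)
  then show ?case using log_rational.mult[of f S "\<lambda>x. f x ^ n"] by simp
qed (use log_rational.const[of 1] in simp)

lemma log_rational_has_derivative:
  assumes "f \<in> log_rational S"
  shows "\<exists>f'. (\<forall>x\<in>S. (f has_derivative f' x) (at x)) \<and> (\<forall>u. (\<lambda>x. f' x u) \<in> log_rational S)"
  using assms
proof (induction rule: log_rational.induct)
  case (const c)
  show ?case by (rule exI[of _ "\<lambda>x h. 0"]) (auto intro: log_rational.const)
next
  case (inner b)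
  show ?case
    by (rule exI[of _ "\<lambda>x h. h \<bullet> b"]) (auto intro!: log_rational.const derivative_eq_intros)
next
  case (add f g)
  then obtain f' g' where
    "\<forall>x\<in>S. (f has_derivative f' x) (at x)" "\<forall>u. (\<lambda>x. f' x u) \<in> log_rational S"
    "\<forall>x\<in>S. (g has_derivative g' x) (at x)" "\<forall>u. (\<lambda>x. g' x u) \<in> log_rational S"
    by blast
  then show ?case
    by (intro exI[of _ "\<lambda>x h. f' x h + g' x h"]) (auto intro!: log_rational.add derivative_eq_intros)
next
  case (mult f g)
  then obtain f' g' where
    f: "\<forall>x\<in>S. (f has_derivative f' x) (at x)" "\<forall>u. (\<lambda>x. f' x u) \<in> log_rational S" and
    g: "\<forall>x\<in>S. (g has_derivative g' x) (at x)" "\<forall>u. (\<lambda>x. g' x u) \<in> log_rational S"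
    by blast
  show ?case
    by (rule exI[of _ "\<lambda>x h. f x * g' x h + f' x h * g x"])
      (use f g mult.hyps in \<open>auto intro!: log_rational.add log_rational.mult has_derivative_mult\<close>)
next
  case (inverse f)
  then obtain f' where
    f: "\<forall>x\<in>S. (f has_derivative f' x) (at x)" "\<forall>u. (\<lambda>x. f' x u) \<in> log_rational S"
    by blast
  show ?case
  proof (rule exI[of _ "\<lambda>x h. - (inverse (f x) * f' x h * inverse (f x))"], intro conjI ballI allI)
    fix x assume "x \<in> S"
    then show "((\<lambda>x. inverse (f x)) has_derivative (\<lambda>h. - (inverse (f x) * f' x h * inverse (f x)))) (at x)"
      using f inverse by (auto intro!: has_derivative_inverse)
  next
    fix u show "(\<lambda>x. - (inverse (f x) * f' x u * inverse (f x))) \<in> log_rational S"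
      using f inverse by (auto intro!: log_rational_minus log_rational.mult log_rational.inverse)
  qed
next
  case (ln f)
  then obtain f' where
    f: "\<forall>x\<in>S. (f has_derivative f' x) (at x)" "\<forall>u. (\<lambda>x. f' x u) \<in> log_rational S"
    by blast
  show ?case
  proof (rule exI[of _ "\<lambda>x h. f' x h * inverse (f x)"], intro conjI ballI allI)
    fix x assume "x \<in> S"
    then show "((\<lambda>x. ln (f x)) has_derivative (\<lambda>h. f' x h * inverse (f x))) (at x)"
      using f ln by (auto intro!: has_derivative_ln)
  next
    fix u show "(\<lambda>x. f' x u * inverse (f x)) \<in> log_rational S"
      using f ln by (auto intro!: log_rational.mult log_rational.inverse)
  qed
qed

lemma log_rational_dderiv_eq:
  assumes "f \<in> log_rational S"
  obtains f' where "\<And>x. x \<in> S \<Longrightarrow> (f has_derivative f' x) (at x)"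
    and "\<And>x v. x \<in> S \<Longrightarrow> dderiv f v x = f' x v" and "\<And>v. (\<lambda>x. f' x v) \<in> log_rational S"
proof -
  obtain f' where f': "\<forall>x\<in>S. (f has_derivative f' x) (at x)" "\<forall>u. (\<lambda>x. f' x u) \<in> log_rational S"
    using log_rational_has_derivative[OF assms] by blast
  moreover have "dderiv f v x = f' x v" if "x \<in> S" for v x
    using frechet_derivative_at[OF f'(1)[rule_format, OF that]] by (simp add: dderiv_def)
  ultimately show ?thesis by (intro that[of f']) auto
qed

lemma log_rational_has_derivative_dderiv:
  assumes "f \<in> log_rational S" "x \<in> S"
  shows "(f has_derivative (\<lambda>v. dderiv f v x)) (at x)"
proof -
  obtain f' where "(f has_derivative f' x) (at x)" "\<And>v. dderiv f v x = f' x v"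
    using log_rational_dderiv_eq[OF assms(1)] assms(2) by metis
  then show ?thesis by simp
qed

lemma log_rational_Ck:
  assumes "open S" "g \<in> log_rational S" "\<forall>x\<in>S. f x = g x"
  shows "Ck k S f"
  using assms(2,3)
proof (induction k arbitrary: f g)
  case 0
  have "continuous_on S g"
  proof (intro continuous_at_imp_continuous_on ballI)
    show "isCont g x" if "x \<in> S" for x
      using log_rational_has_derivative_dderiv[OF "0.prems"(1) that] by (rule has_derivative_continuous)
  qed
  moreover have "continuous_on S f = continuous_on S g"
    using "0.prems"(2) by (intro continuous_on_cong) auto
  ultimately show ?case by simp
next
  case (Suc k)
  obtain g' where g': "\<And>x. x \<in> S \<Longrightarrow> (g has_derivative g' x) (at x)"
    and "\<And>x v. x \<in> S \<Longrightarrow> dderiv g v x = g' x v" and "\<And>v. (\<lambda>x. g' x v) \<in> log_rational S"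
    using log_rational_dderiv_eq[OF Suc.prems(1)] by metis
  have f: "(f has_derivative g' x) (at x)" if "x \<in> S" for x
    using Suc.prems(2) by (intro has_derivative_transform_within_open[OF g'[OF that] assms(1) that]) auto
  then have "f differentiable_on S"
    by (meson differentiableI differentiable_at_imp_differentiable_on)
  moreover have "Ck k S (\<lambda>x. frechet_derivative f (at x) b)" for b
  proof (rule Suc.IH)
    show "\<forall>x\<in>S. frechet_derivative f (at x) b = g' x b"
      using frechet_derivative_at[OF f] by simp
  qed fact
  ultimately show ?case by simp
qed

lemma smooth_fun_log_rational: "open S \<Longrightarrow> f \<in> log_rational S \<Longrightarrow> smooth_fun S f"
  unfolding smooth_fun_def using log_rational_Ck[of S f f] by simp

section \<open>Complex polynomial functions\<close>

lemma norm_smult_vec: "norm (c *s z) = cmod c * norm (z :: complex^'m)"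
  unfolding norm_vec_def by (simp add: norm_mult L2_set_right_distrib)

lemma scaleR_eq_of_real_smult: "r *\<^sub>R z = complex_of_real r *s (z :: complex^'m)"
  unfolding vec_eq_iff vector_scaleR_component vector_smult_component by (simp add: scaleR_conv_of_real)

lemma has_derivative_complex_line:
  "((\<lambda>\<tau>::complex. z + \<tau> *s w) has_derivative (\<lambda>\<tau>. \<tau> *s w)) (at \<tau>0)"
proof -
  have "bounded_linear (\<lambda>\<tau>::complex. \<tau> *s w)"
  proof (rule bounded_linear_intro[where K = "norm w"])
    show "(x + y) *s w = x *s w + y *s w" for x y by simp
    show "(r *\<^sub>R x) *s w = r *\<^sub>R (x *s w)" for r x
      by (simp add: scaleR_eq_of_real_smult vector_smult_assoc scaleR_conv_of_real)
    show "norm (x *s w) \<le> norm x * norm w" for x by (simp add: norm_smult_vec)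
  qed
  then show ?thesis by (auto intro!: derivative_eq_intros bounded_linear_imp_has_derivative)
qed

inductive_set complex_poly :: "(complex^'m \<Rightarrow> complex) set" where
  const: "(\<lambda>x. c) \<in> complex_poly"
| component: "(\<lambda>x. x $ j) \<in> complex_poly"
| add: "p \<in> complex_poly \<Longrightarrow> q \<in> complex_poly \<Longrightarrow> (\<lambda>x. p x + q x) \<in> complex_poly"
| mult: "p \<in> complex_poly \<Longrightarrow> q \<in> complex_poly \<Longrightarrow> (\<lambda>x. p x * q x) \<in> complex_poly"

lemma complex_poly_sum:
  "(\<And>i. i \<in> I \<Longrightarrow> p i \<in> complex_poly) \<Longrightarrow> (\<lambda>x. \<Sum>i\<in>I. p i x) \<in> complex_poly"
proof (induction I rule: infinite_finite_induct)
  case (insert a F)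
  then show ?case using complex_poly.add[of "p a" "\<lambda>x. \<Sum>i\<in>F. p i x"] by simp
qed (use complex_poly.const[of 0] in simp_all)

lemma complex_poly_prod:
  "(\<And>i. i \<in> I \<Longrightarrow> p i \<in> complex_poly) \<Longrightarrow> (\<lambda>x. \<Prod>i\<in>I. p i x) \<in> complex_poly"
proof (induction I rule: infinite_finite_induct)
  case (insert a F)
  then show ?case using complex_poly.mult[of "p a" "\<lambda>x. \<Prod>i\<in>F. p i x"] by simp
qed (use complex_poly.const[of 1] in simp_all)

lemma complex_poly_power: "p \<in> complex_poly \<Longrightarrow> (\<lambda>x. p x ^ n) \<in> complex_poly"
proof (induction n)
  case (Suc n)
  then show ?case using complex_poly.mult[of p "\<lambda>x. p x ^ n"] by simp
qed (use complex_poly.const[of 1] in simp)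

lemma homog_poly_complex_poly:
  assumes "homog_poly d p"
  shows "p \<in> complex_poly"
proof -
  obtain c where p: "p = (\<lambda>z. \<Sum>\<alpha>\<in>{\<alpha>. sum \<alpha> UNIV = d}. c \<alpha> * (\<Prod>i\<in>UNIV. (z$i) ^ \<alpha> i))"
    using assms unfolding homog_poly_def by blast
  show ?thesis
    unfolding p by (intro complex_poly_sum complex_poly.mult complex_poly.const complex_poly_prod
        complex_poly_power complex_poly.component)
qed

lemma homog_poly_smult:
  assumes "homog_poly d p"
  shows "p (c *s z) = c ^ d * p z"
proof -
  obtain co where p: "\<And>z. p z = (\<Sum>\<alpha>\<in>{\<alpha>. sum \<alpha> UNIV = d}. co \<alpha> * (\<Prod>i\<in>UNIV. (z$i) ^ \<alpha> i))"
    using assms unfolding homog_poly_def by blast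
  have "(\<Prod>i\<in>UNIV. ((c *s z)$i) ^ \<alpha> i) = c ^ d * (\<Prod>i\<in>UNIV. (z$i) ^ \<alpha> i)"
    if "sum \<alpha> UNIV = d" for \<alpha> :: "'a \<Rightarrow> nat"
    by (simp add: power_mult_distrib prod.distrib power_sum[symmetric] that)
  then show ?thesis
    unfolding p by (simp add: sum_distrib_left mult.left_commute)
qed

lemma log_rational_Re_Im_complex_poly:
  "p \<in> complex_poly \<Longrightarrow> (\<lambda>x. Re (p x)) \<in> log_rational S \<and> (\<lambda>x. Im (p x)) \<in> log_rational S"
proof (induction rule: complex_poly.induct)
  case (const c)
  then show ?case using log_rational.const by auto
next
  case (component j)
  have "(\<lambda>x::complex^'a. x \<bullet> axis j 1) \<in> log_rational S" "(\<lambda>x::complex^'a. x \<bullet> axis j \<i>) \<in> log_rational S"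
    by (rule log_rational.inner)+
  then show ?case by (simp add: inner_axis)
next
  case (add p q)
  then show ?case
    using log_rational.add[of "\<lambda>x. Re (p x)" S "\<lambda>x. Re (q x)"] log_rational.add[of "\<lambda>x. Im (p x)" S "\<lambda>x. Im (q x)"]
    by simp
next
  case (mult p q)
  then show ?case
    using log_rational_diff[OF log_rational.mult[of "\<lambda>x. Re (p x)" S "\<lambda>x. Re (q x)"]
        log_rational.mult[of "\<lambda>x. Im (p x)" S "\<lambda>x. Im (q x)"]]
      log_rational.add[OF log_rational.mult[of "\<lambda>x. Re (p x)" S "\<lambda>x. Im (q x)"]
        log_rational.mult[of "\<lambda>x. Im (p x)" S "\<lambda>x. Re (q x)"]]
    by simp
qed

lemma continuous_on_complex_poly: "p \<in> complex_poly \<Longrightarrow> continuous_on UNIV p"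
  by (induction rule: complex_poly.induct) (auto intro!: continuous_intros)

lemma holomorphic_on_complex_poly_line:
  "p \<in> complex_poly \<Longrightarrow> (\<lambda>\<tau>. p (z + \<tau> *s w)) holomorphic_on UNIV"
  by (induction rule: complex_poly.induct) (auto intro!: holomorphic_intros)

lemma complex_poly_has_derivative:
  "p \<in> complex_poly \<Longrightarrow> \<exists>L. (p has_derivative L) (at z) \<and> (\<forall>c h. L (c *s h) = c * L h)"
proof (induction rule: complex_poly.induct)
  case (const c)
  show ?case by (rule exI[of _ "\<lambda>h. 0"]) auto
next
  case (component j)
  show ?case by (rule exI[of _ "\<lambda>h. h $ j"]) (auto intro: bounded_linear_imp_has_derivative)
next
  case (add p q)
  then obtain L1 L2 where "(p has_derivative L1) (at z)" "\<forall>c h. L1 (c *s h) = c * L1 h"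
    "(q has_derivative L2) (at z)" "\<forall>c h. L2 (c *s h) = c * L2 h" by blast
  then show ?case
    by (intro exI[of _ "\<lambda>h. L1 h + L2 h"]) (auto intro!: derivative_eq_intros simp: algebra_simps)
next
  case (mult p q)
  then obtain L1 L2 where "(p has_derivative L1) (at z)" "\<forall>c h. L1 (c *s h) = c * L1 h"
    "(q has_derivative L2) (at z)" "\<forall>c h. L2 (c *s h) = c * L2 h" by blast
  then show ?case
    by (intro exI[of _ "\<lambda>h. p z * L2 h + L1 h * q z"] conjI has_derivative_mult) (auto simp: algebra_simps)
qed

definition cdiff :: "(complex^'m \<Rightarrow> complex) \<Rightarrow> complex^'m \<Rightarrow> complex^'m \<Rightarrow> complex" where
  "cdiff p z w = deriv (\<lambda>\<tau>. p (z + \<tau> *s w)) 0"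

lemma linear_cdiff:
  assumes "p \<in> complex_poly"
  shows "Vector_Spaces.linear (*s) (*) (cdiff p z)"
proof -
  obtain L where L: "(p has_derivative L) (at z)" "\<And>c h. L (c *s h) = c * L h"
    using complex_poly_has_derivative[OF assms] by blast
  have "cdiff p z w = L w" for w
  proof -
    have "((\<lambda>\<tau>. p (z + \<tau> *s w)) has_derivative (\<lambda>\<tau>. L (\<tau> *s w))) (at 0)"
      using has_derivative_compose[OF has_derivative_complex_line, of p] L(1) by (simp add: o_def)
    then have "((\<lambda>\<tau>. p (z + \<tau> *s w)) has_field_derivative L w) (at 0)"
      by (simp add: has_field_derivative_def L(2) mult.commute[of _ "L w"])
    then show ?thesis unfolding cdiff_def by (rule DERIV_imp_deriv)
  qed
  moreover have "L (x + y) = L x + L y" for x y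
    using linear_add[OF has_derivative_linear[OF L(1)]] .
  ultimately show ?thesis
    unfolding Vector_Spaces.linear_iff
    using L(2) vec.vector_space_axioms vector_space_over_itself.vector_space_axioms by simp
qed

lemma cdiff_self:
  assumes "\<And>c. p (c *s z) = c ^ d * p z"
  shows "cdiff p z z = of_nat d * p z"
proof -
  have "p (z + \<tau> *s z) = (1 + \<tau>) ^ d * p z" for \<tau>
    using assms[of "1 + \<tau>"] by (simp add: vector_sadd_rdistrib)
  moreover have "((\<lambda>\<tau>. (1 + \<tau>) ^ d * p z) has_field_derivative of_nat d * p z) (at 0)"
    by (auto intro!: derivative_eq_intros)
  ultimately show ?thesis unfolding cdiff_def by (simp add: DERIV_imp_deriv)
qed

lemma higher_deriv_complex_poly_line_smult:
  assumes "p \<in> complex_poly"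
  shows "(deriv ^^ n) (\<lambda>\<tau>. p (z + \<tau> *s (c *s w))) 0 = c ^ n * (deriv ^^ n) (\<lambda>\<tau>. p (z + \<tau> *s w)) 0"
  using higher_deriv_compose_linear'[OF holomorphic_on_complex_poly_line[OF assms], of UNIV 0 c 0 n]
  by (simp add: vector_smult_assoc mult.commute)

lemma cdiff_smult: "p \<in> complex_poly \<Longrightarrow> cdiff p z (c *s w) = c * cdiff p z w"
  using higher_deriv_complex_poly_line_smult[of p 1] by (simp add: cdiff_def)

lemma eventually_line_in_open:
  fixes z u :: "'a::real_normed_vector"
  assumes "open S" "z \<in> S"
  shows "\<forall>\<^sub>F t in nhds 0. z + t *\<^sub>R u \<in> S"
proof -
  have "open ((\<lambda>t::real. z + t *\<^sub>R u) -` S)"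
    using assms(1) by (rule continuous_open_vimage) (auto intro!: continuous_intros)
  then show ?thesis
    unfolding eventually_nhds using assms(2) by (intro exI[of _ "(\<lambda>t. z + t *\<^sub>R u) -` S"]) auto
qed

lemma log_rational_has_derivative_dderiv2:
  assumes "open S" "f \<in> log_rational S" "z \<in> S"
  shows "(dderiv f u has_derivative (\<lambda>v. dderiv (dderiv f u) v z)) (at z)"
proof -
  obtain f' where f': "\<And>x v. x \<in> S \<Longrightarrow> dderiv f v x = f' x v" "(\<lambda>x. f' x u) \<in> log_rational S"
    using log_rational_dderiv_eq[OF assms(2)] by metis
  have "(dderiv f u has_derivative (\<lambda>v. dderiv (\<lambda>x. f' x u) v z)) (at z)"
    using f' by (intro has_derivative_transform_within_open[OF
          log_rational_has_derivative_dderiv[OF f'(2) assms(3)] assms(1,3)]) auto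
  moreover from this have "(\<lambda>v. dderiv (dderiv f u) v z) = (\<lambda>v. dderiv (\<lambda>x. f' x u) v z)"
    unfolding dderiv_def[of "dderiv f u"] by (metis dderiv_def frechet_derivative_at)
  ultimately show ?thesis by simp
qed

lemma bilinear_dderiv2:
  assumes "open S" "f \<in> log_rational S" "z \<in> S"
  shows "bilinear (\<lambda>u v. dderiv (dderiv f u) v z)"
proof -
  note d1 = log_rational_has_derivative_dderiv[OF assms(2)]
  note d2 = log_rational_has_derivative_dderiv2[OF assms]
  have lin1: "linear (\<lambda>v. dderiv f v x)" if "x \<in> S" for x
    using has_derivative_linear[OF d1[OF that]] .
  have add: "dderiv (dderiv f (u1 + u2)) v z = dderiv (dderiv f u1) v z + dderiv (dderiv f u2) v z"
    for u1 u2 v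
  proof -
    have "(dderiv f (u1 + u2) has_derivative (\<lambda>v. dderiv (dderiv f u1) v z + dderiv (dderiv f u2) v z)) (at z)"
      using linear_add[OF lin1]
      by (intro has_derivative_transform_within_open[OF has_derivative_add[OF d2 d2] assms(1,3)]) auto
    from has_derivative_unique[OF d2 this] show ?thesis by meson
  qed
  have scale: "dderiv (dderiv f (a *\<^sub>R u)) v z = a *\<^sub>R dderiv (dderiv f u) v z" for a u v
  proof -
    have "(dderiv f (a *\<^sub>R u) has_derivative (\<lambda>v. a * dderiv (dderiv f u) v z)) (at z)"
      using linear_scale[OF lin1]
      by (intro has_derivative_transform_within_open[OF has_derivative_mult_right[OF d2] assms(1,3)]) auto
    from has_derivative_unique[OF d2 this] show ?thesis by simp meson
  qed
  show ?thesis
    unfolding bilinear_def using has_derivative_linear[OF d2] add scale by (auto intro!: linearI)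
qed

lemma has_real_derivative_line:
  fixes f :: "'a::real_normed_vector \<Rightarrow> real"
  assumes "(f has_derivative f') (at (z + t *\<^sub>R u))"
  shows "((\<lambda>t. f (z + t *\<^sub>R u)) has_real_derivative f' u) (at t)"
proof -
  have "((\<lambda>t. z + t *\<^sub>R u) has_derivative (\<lambda>s. s *\<^sub>R u)) (at t)"
    by (auto intro!: derivative_eq_intros)
  from has_derivative_compose[OF this assms]
  have "((\<lambda>t. f (z + t *\<^sub>R u)) has_derivative (\<lambda>s. f' (s *\<^sub>R u))) (at t)"
    by (simp add: o_def)
  moreover have "f' (s *\<^sub>R u) = f' u * s" for s
    using linear_scale[OF has_derivative_linear[OF assms]] by simp
  ultimately show ?thesis by (simp add: has_field_derivative_def)
qed

lemma has_real_derivative_dderiv_line: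
  assumes "open S" "f \<in> log_rational S" "z \<in> S"
  shows "((\<lambda>t. dderiv f u (z + t *\<^sub>R u)) has_real_derivative dderiv (dderiv f u) u z) (at 0)"
  using has_real_derivative_line[of "dderiv f u" "\<lambda>v. dderiv (dderiv f u) v z" z 0 u]
    log_rational_has_derivative_dderiv2[OF assms] by simp

lemma dderiv2_eq_line:
  assumes "open S" "f \<in> log_rational S" "z \<in> S"
    and "\<forall>\<^sub>F t in nhds 0. ((\<lambda>t. f (z + t *\<^sub>R u)) has_real_derivative psi t) (at t)"
    and "(psi has_real_derivative c) (at 0)"
  shows "dderiv (dderiv f u) u z = c"
proof -
  have ev: "\<forall>\<^sub>F t in nhds 0. psi t = dderiv f u (z + t *\<^sub>R u)"
    using assms(4) eventually_line_in_open[OF assms(1,3), of u]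
  proof eventually_elim
    case (elim t)
    then show ?case
      using has_real_derivative_line[OF log_rational_has_derivative_dderiv[OF assms(2)]] DERIV_unique
      by blast
  qed
  then have "((\<lambda>t. dderiv f u (z + t *\<^sub>R u)) has_real_derivative c) (at 0)"
    using DERIV_cong_ev[OF refl ev refl, of c] assms(5) by simp
  with has_real_derivative_dderiv_line[OF assms(1-3)] show ?thesis
    using DERIV_unique by blast
qed

lemma dderiv2_ln:
  assumes "open S" "f \<in> log_rational S" "\<forall>x\<in>S. f x > 0" "z \<in> S"
    and "\<And>t. ((\<lambda>t. f (z + t *\<^sub>R u)) has_real_derivative f1 t) (at t)"
    and "(f1 has_real_derivative f2) (at 0)"
  shows "dderiv (dderiv (\<lambda>x. ln (f x)) u) u z = (f2 * f z - (f1 0)\<^sup>2) / (f z)\<^sup>2"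
proof (rule dderiv2_eq_line[OF assms(1) log_rational.ln[OF assms(2,3)] assms(4)])
  show "\<forall>\<^sub>F t in nhds 0. ((\<lambda>t. ln (f (z + t *\<^sub>R u))) has_real_derivative f1 t / f (z + t *\<^sub>R u)) (at t)"
    using eventually_line_in_open[OF assms(1,4), of u]
  proof eventually_elim
    case (elim t)
    then show ?case
      using DERIV_chain2[OF DERIV_ln assms(5)[of t]] assms(3) by (simp add: divide_inverse mult.commute)
  qed
  have "f z \<noteq> 0" using assms(3,4) by auto
  then show "((\<lambda>t. f1 t / f (z + t *\<^sub>R u)) has_real_derivative (f2 * f z - (f1 0)\<^sup>2) / (f z)\<^sup>2) (at 0)"
    using DERIV_quotient[OF assms(6) assms(5)[of 0]] by (simp add: power2_eq_square mult.commute)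
qed

lemma dderiv2_scale_diff:
  assumes "open S" "f \<in> log_rational S" "g \<in> log_rational S" "z \<in> S"
  shows "dderiv (dderiv (\<lambda>x. a * f x - g x) u) u z = a * dderiv (dderiv f u) u z - dderiv (dderiv g u) u z"
proof (rule dderiv2_eq_line[OF assms(1) _ assms(4)])
  show "(\<lambda>x. a * f x - g x) \<in> log_rational S"
    by (intro log_rational_diff log_rational.mult log_rational.const assms(2,3))
  show "\<forall>\<^sub>F t in nhds 0. ((\<lambda>t. a * f (z + t *\<^sub>R u) - g (z + t *\<^sub>R u)) has_real_derivative
      a * dderiv f u (z + t *\<^sub>R u) - dderiv g u (z + t *\<^sub>R u)) (at t)"
    using eventually_line_in_open[OF assms(1,4), of u]
  proof eventually_elim
    case (elim t)
    show ?case
      by (intro DERIV_diff DERIV_cmult has_real_derivative_line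
          log_rational_has_derivative_dderiv[OF assms(2) elim] log_rational_has_derivative_dderiv[OF assms(3) elim])
  qed
  show "((\<lambda>t. a * dderiv f u (z + t *\<^sub>R u) - dderiv g u (z + t *\<^sub>R u)) has_real_derivative
      a * dderiv (dderiv f u) u z - dderiv (dderiv g u) u z) (at 0)"
    using assms by (intro DERIV_diff DERIV_cmult has_real_derivative_dderiv_line[of S])
qed

section \<open>The Levi form\<close>

lemma vec_eq_sum_axis:
  fixes w :: "complex^'m"
  shows "w = (\<Sum>j\<in>UNIV. Re (w$j) *\<^sub>R axis j 1 + Im (w$j) *\<^sub>R axis j \<i>)"
    and "\<i> *s w = (\<Sum>j\<in>UNIV. (- Im (w$j)) *\<^sub>R axis j 1 + Re (w$j) *\<^sub>R axis j \<i>)"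
proof -
  have ax: "axis j c $ i = (if i = j then c else 0)" for j i and c :: complex
    unfolding axis_def by simp
  have c1: "(Re (w$j) *\<^sub>R axis j 1 + Im (w$j) *\<^sub>R axis j \<i>) $ i = (if i = j then w $ j else 0)" for i j
    by (simp add: ax complex_eq_iff)
  have c2: "((- Im (w$j)) *\<^sub>R axis j 1 + Re (w$j) *\<^sub>R axis j \<i>) $ i = (if i = j then \<i> * w $ j else 0)" for i j
    by (simp add: ax complex_eq_iff)
  show "w = (\<Sum>j\<in>UNIV. Re (w$j) *\<^sub>R axis j 1 + Im (w$j) *\<^sub>R axis j \<i>)"
    unfolding vec_eq_iff sum_component c1 by (simp add: sum.delta')
  show "\<i> *s w = (\<Sum>j\<in>UNIV. (- Im (w$j)) *\<^sub>R axis j 1 + Re (w$j) *\<^sub>R axis j \<i>)"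
    unfolding vec_eq_iff sum_component c2 by (simp add: sum.delta')
qed

lemma Re_levi_form_eq_dderiv2:
  fixes f :: "complex^'m \<Rightarrow> real"
  assumes "bilinear (\<lambda>u v. dderiv (dderiv f u) v z)"
  shows "Re (levi_form f z w) = (dderiv (dderiv f w) w z + dderiv (dderiv f (\<i> *s w)) (\<i> *s w) z) / 4"
proof -
  define h where "h = (\<lambda>u v. dderiv (dderiv f u) v z)"
  have h: "bilinear h" using assms unfolding h_def .
  define W where "W j = Re (w$j) *\<^sub>R axis j (1::complex) + Im (w$j) *\<^sub>R axis j \<i>" for j
  define W' where "W' j = (- Im (w$j)) *\<^sub>R axis j (1::complex) + Re (w$j) *\<^sub>R axis j \<i>" for j
  have entry: "4 * Re (wirt2 f i j z * w$i * cnj (w$j)) = h (W j) (W i) + h (W' j) (W' i)" for i j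
  proof -
    have expand: "h (a *\<^sub>R x + b *\<^sub>R y) (c *\<^sub>R x' + d *\<^sub>R y') =
        a*c*h x x' + a*d*h x y' + b*c*h y x' + b*d*h y y'" for a b c d x y x' y'
      by (simp add: bilinear_ladd[OF h] bilinear_radd[OF h] bilinear_lmul[OF h] bilinear_rmul[OF h]
          algebra_simps)
    show ?thesis
      unfolding W_def W'_def expand by (simp add: wirt2_def h_def field_simps)
  qed
  have "h w w + h (\<i> *s w) (\<i> *s w) = (\<Sum>j\<in>UNIV. \<Sum>i\<in>UNIV. h (W j) (W i) + h (W' j) (W' i))"
    unfolding vec_eq_sum_axis(2)[of w, folded W'_def] sum.distrib
    by (subst (1 2) vec_eq_sum_axis(1)[of w, folded W_def])
      (simp add: bilinear_sum[OF h] sum.cartesian_product)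
  also have "\<dots> = (\<Sum>i\<in>UNIV. \<Sum>j\<in>UNIV. 4 * Re (wirt2 f i j z * w$i * cnj (w$j)))"
    unfolding entry by (rule sum.swap)
  also have "\<dots> = 4 * Re (levi_form f z w)"
    unfolding levi_form_def by (simp add: sum_distrib_left)
  finally show ?thesis unfolding h_def by simp
qed

section \<open>Two logarithmic Hessians\<close>

lemma log_rational_norm_power2: "(\<lambda>x. (norm x)\<^sup>2) \<in> log_rational S"
proof -
  have "(\<lambda>x. \<Sum>b\<in>Basis. (x \<bullet> b) * (x \<bullet> b)) \<in> log_rational S"
    by (intro log_rational_sum log_rational.mult log_rational.inner)
  then show ?thesis by (simp add: power2_norm_eq_inner euclidean_inner[symmetric])
qed

lemma log_rational_ln_norm_power2: "0 \<notin> S \<Longrightarrow> (\<lambda>x. ln ((norm x)\<^sup>2)) \<in> log_rational S"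
  by (intro log_rational.ln log_rational_norm_power2) auto

lemma dderiv2_ln_norm_power2:
  fixes z u :: "'a::euclidean_space"
  assumes "z \<noteq> 0"
  shows "dderiv (dderiv (\<lambda>x. ln ((norm x)\<^sup>2)) u) u z =
    (2 * (u \<bullet> u) * (z \<bullet> z) - (2 * (z \<bullet> u))\<^sup>2) / (z \<bullet> z)\<^sup>2"
proof -
  have line: "(norm (z + t *\<^sub>R u))\<^sup>2 = z \<bullet> z + 2 * t * (z \<bullet> u) + t\<^sup>2 * (u \<bullet> u)" for t
    unfolding power2_norm_eq_inner
    by (simp add: inner_add_left inner_add_right inner_commute algebra_simps power2_eq_square)
  have "dderiv (dderiv (\<lambda>x. ln ((norm x)\<^sup>2)) u) u z =
      (2 * (u \<bullet> u) * (norm z)\<^sup>2 - (2 * (z \<bullet> u) + 2 * 0 * (u \<bullet> u))\<^sup>2) / ((norm z)\<^sup>2)\<^sup>2"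
  proof (rule dderiv2_ln[where S = "-{0}"])
    show "((\<lambda>t. (norm (z + t *\<^sub>R u))\<^sup>2) has_real_derivative 2 * (z \<bullet> u) + 2 * t * (u \<bullet> u)) (at t)" for t
      unfolding line by (auto intro!: derivative_eq_intros simp: algebra_simps)
    show "((\<lambda>t. 2 * (z \<bullet> u) + 2 * t * (u \<bullet> u)) has_real_derivative 2 * (u \<bullet> u)) (at 0)"
      by (auto intro!: derivative_eq_intros)
  qed (use assms log_rational_norm_power2 in auto)
  then show ?thesis by (simp add: power2_norm_eq_inner)
qed

lemma has_real_derivative_Re_cnj_mult:
  assumes "(g has_field_derivative g') (at (of_real t))" "(h has_field_derivative h') (at (of_real t))"
  shows "((\<lambda>t. Re (cnj (g (of_real t)) * h (of_real t))) has_real_derivative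
      Re (cnj g' * h (of_real t)) + Re (cnj (g (of_real t)) * h')) (at t)"
proof -
  have g: "((\<lambda>t. g (of_real t)) has_vector_derivative g') (at t)"
    and h: "((\<lambda>t. h (of_real t)) has_vector_derivative h') (at t)"
    using assms by (auto intro: has_vector_derivative_real_field)
  have "Re (cnj a * b) = Re a * Re b + Im a * Im b" for a b by simp
  with DERIV_add[OF DERIV_mult[OF has_field_derivative_Re[OF g] has_field_derivative_Re[OF h]]
      DERIV_mult[OF has_field_derivative_Im[OF g] has_field_derivative_Im[OF h]]]
  show ?thesis by (simp add: algebra_simps)
qed

lemma log_rational_cmod_power2_complex_poly:
  "p \<in> complex_poly \<Longrightarrow> (\<lambda>x. (cmod (p x))\<^sup>2) \<in> log_rational S"
  using log_rational_Re_Im_complex_poly[of p S]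
  by (simp add: cmod_power2 log_rational.add log_rational_power)

lemma dderiv2_ln_sum_cmod_power2:
  assumes q: "\<And>i. i \<in> I \<Longrightarrow> q i \<in> complex_poly"
    and pos: "(\<Sum>i\<in>I. (cmod (q i z))\<^sup>2) > 0"
    and crit: "\<And>i. i \<in> I \<Longrightarrow> cdiff (q i) z u = 0"
  shows "dderiv (dderiv (\<lambda>x. ln (\<Sum>i\<in>I. (cmod (q i x))\<^sup>2)) u) u z =
    (\<Sum>i\<in>I. 2 * Re (cnj (q i z) * (deriv ^^ 2) (\<lambda>\<tau>. q i (z + \<tau> *s u)) 0)) / (\<Sum>i\<in>I. (cmod (q i z))\<^sup>2)"
proof -
  define s where "s x = (\<Sum>i\<in>I. (cmod (q i x))\<^sup>2)" for x
  define g where "g i \<tau> = q i (z + \<tau> *s u)" for i \<tau>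
  define f1 where "f1 t = (\<Sum>i\<in>I. Re (cnj (deriv (g i) (of_real t)) * g i (of_real t))
      + Re (cnj (g i (of_real t)) * deriv (g i) (of_real t)))" for t :: real
  define f2 where "f2 t = (\<Sum>i\<in>I.
      Re (cnj (deriv (deriv (g i)) (of_real t)) * g i (of_real t)) + Re (cnj (deriv (g i) (of_real t)) * deriv (g i) (of_real t))
      + (Re (cnj (deriv (g i) (of_real t)) * deriv (g i) (of_real t)) + Re (cnj (g i (of_real t)) * deriv (deriv (g i)) (of_real t))))"
    for t :: real
  have hol: "g i holomorphic_on UNIV" "deriv (g i) holomorphic_on UNIV" if "i \<in> I" for i
    unfolding g_def using holomorphic_on_complex_poly_line[OF q[OF that]] holomorphic_deriv by auto
  have d1: "(g i has_field_derivative deriv (g i) \<tau>) (at \<tau>)"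
    and d2: "(deriv (g i) has_field_derivative deriv (deriv (g i)) \<tau>) (at \<tau>)" if "i \<in> I" for i \<tau>
    using holomorphic_derivI[OF hol(1)[OF that]] holomorphic_derivI[OF hol(2)[OF that]] by auto
  have line: "s (z + t *\<^sub>R u) = (\<Sum>i\<in>I. Re (cnj (g i (of_real t)) * g i (of_real t)))" for t
    unfolding s_def g_def scaleR_eq_of_real_smult cmod_power2 by (simp add: power2_eq_square)
  have "dderiv (dderiv (\<lambda>x. ln (s x)) u) u z = (f2 0 * s z - (f1 0)\<^sup>2) / (s z)\<^sup>2"
  proof (rule dderiv2_ln[where S = "{x. 0 < s x}"])
    have "continuous_on UNIV s"
      unfolding s_def using q continuous_on_complex_poly by (auto intro!: continuous_intros)
    then show "open {x. 0 < s x}" by (intro open_Collect_less continuous_intros)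
    show "s \<in> log_rational {x. 0 < s x}"
      unfolding s_def[abs_def] by (intro log_rational_sum log_rational_cmod_power2_complex_poly q)
    show "((\<lambda>t. s (z + t *\<^sub>R u)) has_real_derivative f1 t) (at t)" for t
      unfolding line f1_def by (intro DERIV_sum has_real_derivative_Re_cnj_mult d1) simp_all
    show "(f1 has_real_derivative f2 0) (at 0)"
      unfolding f1_def[abs_def] f2_def
      by (intro DERIV_sum DERIV_add has_real_derivative_Re_cnj_mult d1 d2) simp_all
  qed (use pos s_def in auto)
  moreover have "deriv (g i) 0 = 0" if "i \<in> I" for i
    using crit[OF that] unfolding cdiff_def g_def .
  then have "f1 0 = 0" and "f2 0 = (\<Sum>i\<in>I. 2 * Re (cnj (g i 0) * (deriv ^^ 2) (g i) 0))"
    unfolding f1_def f2_def by (auto intro!: sum.cong simp: numeral_2_eq_2)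
  ultimately show ?thesis
    using pos unfolding s_def g_def by (simp add: power2_eq_square)
qed

lemma dim_le_dim_Int_kernel:
  fixes V :: "('a::field^'n) set"
  assumes V: "vec.subspace V" and L: "Vector_Spaces.linear (*s) (*) L"
  shows "vec.dim V \<le> vec.dim (V \<inter> {w. L w = 0}) + 1"
proof (cases "\<forall>v\<in>V. L v = 0")
  case True
  then have "V \<inter> {w. L w = 0} = V" by auto
  then show ?thesis by simp
next
  case False
  interpret L: Vector_Spaces.linear "(*s)" "(*)" L by (fact L)
  obtain v0 where v0: "v0 \<in> V" "L v0 \<noteq> 0" using False by blast
  obtain B where B: "B \<subseteq> V \<inter> {w. L w = 0}" "vec.independent B" "V \<inter> {w. L w = 0} \<subseteq> vec.span B"
    "card B = vec.dim (V \<inter> {w. L w = 0})"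
    using vec.basis_exists by blast
  have "V \<subseteq> vec.span (insert v0 B)"
  proof
    fix v assume v: "v \<in> V"
    define c where "c = L v / L v0"
    have "v - c *s v0 \<in> V \<inter> {w. L w = 0}"
      using vec.subspace_diff[OF V v vec.subspace_scale[OF V v0(1)]] v0(2)
      by (simp add: L.diff L.scale c_def)
    then show "v \<in> vec.span (insert v0 B)" using B(3) vec.span_breakdown_eq by blast
  qed
  moreover have "finite B" using B(2) vec.finiteI_independent by blast
  ultimately have "vec.dim V \<le> card (insert v0 B)" using vec.dim_le_card by blast
  also have "\<dots> \<le> card B + 1" by (simp add: card_insert_if \<open>finite B\<close>)
  finally show ?thesis using B(4) by simp
qed

lemma dim_common_kernel:
  fixes L :: "nat \<Rightarrow> 'a::field^'n \<Rightarrow> 'a"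
  assumes "\<And>i. i < k \<Longrightarrow> Vector_Spaces.linear (*s) (*) (L i)"
  shows "vec.subspace {w. \<forall>i<k. L i w = 0} \<and> CARD('n) - k \<le> vec.dim {w. \<forall>i<k. L i w = 0}"
  using assms
proof (induction k)
  case 0
  then show ?case using vec_dim_card[where 'a='a and 'n='n] by simp
next
  case (Suc k)
  let ?V = "{w::'a^'n. \<forall>i<k. L i w = 0}"
  have IH: "vec.subspace ?V" "CARD('n) - k \<le> vec.dim ?V" using Suc by auto
  have eq: "{w. \<forall>i<Suc k. L i w = 0} = ?V \<inter> {w. L k w = 0}" by (auto simp: less_Suc_eq)
  interpret L: Vector_Spaces.linear "(*s)" "(*)" "L k" using Suc.prems by simp
  have "vec.subspace {w. \<forall>i<Suc k. L i w = 0}"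
    unfolding eq using IH(1) L.subspace_kernel by (rule vec.subspace_inter)
  moreover have "vec.dim ?V \<le> vec.dim {w. \<forall>i<Suc k. L i w = 0} + 1"
    unfolding eq using IH(1) Suc.prems by (intro dim_le_dim_Int_kernel) auto
  ultimately show ?case using IH(2) by linarith
qed

lemma inner_smult_i_self: "(w::complex^'m) \<bullet> (\<i> *s w) = 0"
  unfolding inner_vec_def by (simp add: inner_complex_def)

lemma inner_smult_i_smult_i: "(\<i> *s w) \<bullet> (\<i> *s (w::complex^'m)) = w \<bullet> w"
  unfolding inner_vec_def by (simp add: inner_complex_def add.commute)

lemma complex_Cauchy_Schwarz_strict:
  fixes z w :: "complex^'m"
  assumes w: "w \<noteq> 0" and indep: "\<And>c. z \<noteq> c *s w"
  shows "(z \<bullet> w)\<^sup>2 + (z \<bullet> (\<i> *s w))\<^sup>2 < (w \<bullet> w) * (z \<bullet> z)"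
proof -
  define a where "a = z \<bullet> w"
  define b where "b = z \<bullet> (\<i> *s w)"
  txt \<open>y is |w|^2 times the component of z orthogonal to the complex line through w.\<close>
  define y where "y = (w \<bullet> w) *\<^sub>R z - (a *\<^sub>R w + b *\<^sub>R (\<i> *s w))"
  have ww: "w \<bullet> w > 0" using w by simp
  have "y \<bullet> y = (w \<bullet> w) * (w \<bullet> w) * (z \<bullet> z) - 2 * (w \<bullet> w) * (a * (z \<bullet> w) + b * (z \<bullet> (\<i> *s w)))
      + (a\<^sup>2 + b\<^sup>2) * (w \<bullet> w)"
    unfolding y_def
    by (simp add: inner_diff_left inner_diff_right inner_add_left inner_add_right inner_smult_i_self
        inner_smult_i_smult_i inner_commute[of "\<i> *s w" w] inner_commute[of w z]
        inner_commute[of "\<i> *s w" z] power2_eq_square algebra_simps)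
  also have "\<dots> = (w \<bullet> w) * ((w \<bullet> w) * (z \<bullet> z) - a\<^sup>2 - b\<^sup>2)"
    unfolding a_def b_def by (simp add: power2_eq_square algebra_simps)
  finally have yy: "y \<bullet> y = (w \<bullet> w) * ((w \<bullet> w) * (z \<bullet> z) - a\<^sup>2 - b\<^sup>2)" .
  have "y \<noteq> 0"
  proof
    assume "y = 0"
    then have "complex_of_real (w \<bullet> w) *s z = (complex_of_real a + \<i> * complex_of_real b) *s w"
      unfolding y_def scaleR_eq_of_real_smult by (simp add: vector_smult_assoc vector_sadd_rdistrib)
    then have "z = ((complex_of_real a + \<i> * complex_of_real b) / complex_of_real (w \<bullet> w)) *s w"
      using ww by (simp add: vec_eq_iff field_simps)
    with indep show False by blast
  qed
  then have "0 < (w \<bullet> w) * ((w \<bullet> w) * (z \<bullet> z) - a\<^sup>2 - b\<^sup>2)"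
    using yy inner_gt_zero_iff by metis
  with ww show ?thesis unfolding a_def b_def using zero_less_mult_pos by fastforce
qed

section \<open>The potential\<close>

locale homogeneous_system =
  fixes P :: "nat \<Rightarrow> complex^'m \<Rightarrow> complex" and d :: "nat \<Rightarrow> nat" and k :: nat
  assumes homog: "\<And>i. i < k \<Longrightarrow> d i \<ge> 1 \<and> homog_poly (d i) (P i)"
begin

abbreviation U where "U \<equiv> compl_cone k P"

definition deg where "deg = (\<Prod>i<k. d i)"

definition Q where "Q i x = P i x ^ (deg div d i)"

definition S where "S x = (\<Sum>i<k. (cmod (Q i x))\<^sup>2)"

definition F where "F = (\<lambda>x. real deg * ln ((norm x)\<^sup>2) - ln (S x))"

lemma deg_pos: "deg > 0"
  unfolding deg_def using homog by (simp add: Suc_le_eq)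

lemma Q_complex_poly: "i < k \<Longrightarrow> Q i \<in> complex_poly"
  unfolding Q_def[abs_def] using homog homog_poly_complex_poly complex_poly_power by blast

lemma Q_smult:
  assumes "i < k"
  shows "Q i (c *s z) = c ^ deg * Q i z"
proof -
  have "d i dvd deg" unfolding deg_def using assms by (simp add: dvd_prodI)
  then have "d i * (deg div d i) = deg" by simp
  then show ?thesis
    unfolding Q_def homog_poly_smult[OF conjunct2[OF homog[OF assms]]]
    by (metis power_mult power_mult_distrib)
qed

lemma Q_eq_0_iff: "i < k \<Longrightarrow> Q i z = 0 \<longleftrightarrow> P i z = 0"
proof -
  assume i: "i < k"
  have "d i dvd deg" unfolding deg_def using i by (simp add: dvd_prodI)
  then have "deg div d i > 0"
    using deg_pos homog[OF i] by (auto elim!: dvdE)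
  then show ?thesis unfolding Q_def by simp
qed

lemma S_nonneg: "S z \<ge> 0"
  unfolding S_def by (simp add: sum_nonneg)

lemma mem_U_iff: "z \<in> U \<longleftrightarrow> z \<noteq> 0 \<and> S z > 0"
proof -
  have "S z = 0 \<longleftrightarrow> (\<forall>i<k. P i z = 0)"
    unfolding S_def by (auto simp: sum_nonneg_eq_0_iff Q_eq_0_iff)
  then show ?thesis
    unfolding compl_cone_def using S_nonneg[of z] by auto
qed

lemma continuous_on_S: "continuous_on UNIV S"
  unfolding S_def[abs_def] using Q_complex_poly continuous_on_complex_poly
  by (auto intro!: continuous_intros)

lemma open_U: "open U"
proof -
  have "U = -{0} \<inter> {z. 0 < S z}" using mem_U_iff by auto
  then show ?thesis
    using continuous_on_S by (auto intro!: open_Int open_Collect_less continuous_intros)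
qed

lemma log_rational_ln_S: "(\<lambda>x. ln (S x)) \<in> log_rational U"
proof (rule log_rational.ln)
  show "S \<in> log_rational U"
    unfolding S_def[abs_def] by (intro log_rational_sum log_rational_cmod_power2_complex_poly Q_complex_poly) simp
qed (simp add: mem_U_iff)

lemma log_rational_F: "F \<in> log_rational U"
  unfolding F_def
  by (intro log_rational_diff log_rational.mult log_rational.const log_rational_ln_S
      log_rational_ln_norm_power2) (simp add: mem_U_iff)

lemma S_smult: "S (c *s z) = (cmod c)\<^sup>2 ^ deg * S z"
  unfolding S_def sum_distrib_left
  by (intro sum.cong) (auto simp: Q_smult norm_mult norm_power power_mult_distrib power_mult[symmetric]
      mult.commute[of 2])

lemma smult_mem_U: "z \<in> U \<Longrightarrow> c \<noteq> 0 \<Longrightarrow> c *s z \<in> U"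
  unfolding mem_U_iff S_smult by simp

lemma F_smult:
  assumes "z \<in> U" "c \<noteq> 0"
  shows "F (c *s z) = F z"
proof -
  have pos: "(norm z)\<^sup>2 > 0" "S z > 0" "(cmod c)\<^sup>2 > 0" using assms mem_U_iff by auto
  have "ln ((norm (c *s z))\<^sup>2) = ln ((cmod c)\<^sup>2) + ln ((norm z)\<^sup>2)"
    using pos by (simp add: norm_smult_vec power_mult_distrib ln_mult)
  moreover have "ln (S (c *s z)) = real deg * ln ((cmod c)\<^sup>2) + ln (S z)"
    using pos by (simp add: S_smult ln_mult ln_realpow)
  ultimately show ?thesis unfolding F_def by (simp add: algebra_simps)
qed

lemma proj_invariant_F: "proj_invariant U F"
  unfolding proj_invariant_def using F_smult by blast

lemma F_eq_sgn:
  assumes "z \<in> U"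
  shows "sgn z \<in> U" "F z = - ln (S (sgn z))"
proof -
  have z: "z \<noteq> 0" using assms mem_U_iff by simp
  have sgn: "sgn z = complex_of_real (inverse (norm z)) *s z"
    by (simp add: sgn_div_norm divide_inverse_commute scaleR_eq_of_real_smult)
  show "sgn z \<in> U" unfolding sgn using smult_mem_U[OF assms] z by simp
  have "F z = F (sgn z)" unfolding sgn using F_smult[OF assms] z by simp
  also have "\<dots> = - ln (S (sgn z))" unfolding F_def using z by (simp add: norm_sgn)
  finally show "F z = - ln (S (sgn z))" .
qed

lemma S_bounded_on_sphere: "\<exists>M. \<forall>z. norm z = 1 \<longrightarrow> S z \<le> M"
proof -
  have "bounded (S ` sphere 0 1)"
    by (intro compact_imp_bounded compact_continuous_image continuous_on_subset[OF continuous_on_S]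
        compact_sphere) simp
  then obtain M where "\<forall>y\<in>S ` sphere 0 1. norm y \<le> M" by (auto simp: bounded_iff)
  then have "\<forall>z. norm z = 1 \<longrightarrow> S z \<le> M" by force
  then show ?thesis ..
qed

lemma F_bounded_below: "\<exists>b. \<forall>z\<in>U. b \<le> F z"
proof -
  obtain M where M: "\<And>z. norm z = 1 \<Longrightarrow> S z \<le> M" using S_bounded_on_sphere by blast
  have "- ln (max M 1) \<le> F z" if z: "z \<in> U" for z
  proof -
    have "sgn z \<in> U" "norm (sgn z) = 1" using F_eq_sgn(1)[OF z] z mem_U_iff by (auto simp: norm_sgn)
    then have "ln (S (sgn z)) \<le> ln (max M 1)" using M mem_U_iff by (simp add: max.coboundedI1)
    then show ?thesis using F_eq_sgn(2)[OF z] by simp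
  qed
  then show ?thesis by blast
qed

lemma F_proper:
  assumes s: "\<forall>n. s n \<in> U \<and> norm (s n) = 1"
    and no_acc: "\<not> (\<exists>w\<in>U. \<exists>r. strict_mono r \<and> (s \<circ> r) \<longlonglongrightarrow> w)"
  shows "filterlim (\<lambda>n. F (s n)) at_top sequentially"
  unfolding filterlim_at_top
proof (intro allI, rule ccontr)
  fix B :: real
  assume "\<not> (\<forall>\<^sub>F n in sequentially. B \<le> F (s n))"
  then have "\<forall>m. \<exists>n\<ge>m. F (s n) < B"
    unfolding eventually_sequentially by (meson not_le)
  then have "infinite {n. F (s n) < B}"
    by (simp add: infinite_nat_iff_unbounded_le)
  then obtain r1 :: "nat \<Rightarrow> nat" where r1: "strict_mono r1" "\<And>n. F (s (r1 n)) < B"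
    using infinite_enumerate by blast
  have "\<forall>n. (s \<circ> r1) n \<in> sphere 0 1" using s by simp
  then obtain w r2 where w: "w \<in> sphere 0 1" "strict_mono r2" "((s \<circ> r1) \<circ> r2) \<longlonglongrightarrow> w"
    using compact_sphere[of "0::complex^'m" 1] unfolding compact_def by meson
  have F_sphere: "F (s n) = - ln (S (s n))" for n
    using F_eq_sgn(2) s by (simp add: sgn_div_norm)
  have "exp (- B) < S (s (r1 (r2 n)))" for n
  proof -
    have "- B < ln (S (s (r1 (r2 n))))" using r1(2)[of "r2 n"] F_sphere by simp
    then have "exp (- B) < exp (ln (S (s (r1 (r2 n)))))" by simp
    moreover have "S (s (r1 (r2 n))) > 0" using s mem_U_iff by blast
    ultimately show ?thesis by simp
  qed
  moreover have "(\<lambda>n. S (s (r1 (r2 n)))) \<longlonglongrightarrow> S w"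
    using continuous_on_tendsto_compose[OF continuous_on_S w(3)] by (simp add: o_def)
  ultimately have "exp (- B) \<le> S w"
    by (intro tendsto_lowerbound[of _ _ sequentially]) (auto intro: less_imp_le always_eventually)
  then have "S w > 0" by (rule order.strict_trans2[OF exp_gt_zero])
  moreover have "w \<noteq> 0" using w(1) by auto
  ultimately have "w \<in> U" by (simp add: mem_U_iff)
  moreover have "strict_mono (r1 \<circ> r2)" using r1(1) w(2) by (simp add: strict_mono_o)
  moreover have "(s \<circ> (r1 \<circ> r2)) \<longlonglongrightarrow> w" using w(3) by (simp add: o_assoc)
  ultimately show False using no_acc by blast
qed

lemma proj_exhaustion_F: "proj_exhaustion U F"
proof -
  have "continuous_on U F"
    using log_rational_Ck[OF open_U log_rational_F, of F 0] by simp
  then show ?thesis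
    unfolding proj_exhaustion_def using F_bounded_below F_proper by blast
qed

lemma cdiff_Q_self: "i < k \<Longrightarrow> cdiff (Q i) z z = of_nat deg * Q i z"
  by (rule cdiff_self) (rule Q_smult)

lemma dderiv2_F:
  assumes z: "z \<in> U" and crit: "\<forall>i<k. cdiff (Q i) z u = 0"
  shows "dderiv (dderiv F u) u z =
    real deg * ((2 * (u \<bullet> u) * (z \<bullet> z) - (2 * (z \<bullet> u))\<^sup>2) / (z \<bullet> z)\<^sup>2)
    - (\<Sum>i<k. 2 * Re (cnj (Q i z) * (deriv ^^ 2) (\<lambda>\<tau>. Q i (z + \<tau> *s u)) 0)) / S z"
proof -
  have "dderiv (dderiv F u) u z = real deg * dderiv (dderiv (\<lambda>x. ln ((norm x)\<^sup>2)) u) u z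
      - dderiv (dderiv (\<lambda>x. ln (S x)) u) u z"
    unfolding F_def
    by (rule dderiv2_scale_diff[OF open_U log_rational_ln_norm_power2 log_rational_ln_S z]) (simp add: mem_U_iff)
  also have "dderiv (dderiv (\<lambda>x. ln ((norm x)\<^sup>2)) u) u z =
      (2 * (u \<bullet> u) * (z \<bullet> z) - (2 * (z \<bullet> u))\<^sup>2) / (z \<bullet> z)\<^sup>2"
    using z mem_U_iff by (simp add: dderiv2_ln_norm_power2)
  also have "dderiv (dderiv (\<lambda>x. ln (S x)) u) u z =
      (\<Sum>i<k. 2 * Re (cnj (Q i z) * (deriv ^^ 2) (\<lambda>\<tau>. Q i (z + \<tau> *s u)) 0)) / S z"
    unfolding S_def using z crit Q_complex_poly mem_U_iff[of z]
    by (intro dderiv2_ln_sum_cmod_power2) (auto simp: S_def)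
  finally show ?thesis .
qed

lemma neq_smult_of_cdiff_Q_eq_0:
  assumes z: "z \<in> U" and crit: "\<forall>i<k. cdiff (Q i) z w = 0"
  shows "z \<noteq> c *s w"
proof
  assume "z = c *s w"
  then have "of_nat deg * Q i z = 0" if "i < k" for i
    using crit that by (simp add: cdiff_Q_self[symmetric] cdiff_smult Q_complex_poly)
  then have "S z = 0" unfolding S_def using deg_pos by simp
  then show False using z mem_U_iff by simp
qed

lemma Re_levi_form_F_pos:
  assumes z: "z \<in> U" and w: "w \<noteq> 0" and crit: "\<forall>i<k. cdiff (Q i) z w = 0"
  shows "Re (levi_form F z w) > 0"
proof -
  have crit_i: "\<forall>i<k. cdiff (Q i) z (\<i> *s w) = 0"
    using crit by (simp add: cdiff_smult Q_complex_poly)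
  have rot: "(deriv ^^ 2) (\<lambda>\<tau>. Q i (z + \<tau> *s (\<i> *s w))) 0 = - (deriv ^^ 2) (\<lambda>\<tau>. Q i (z + \<tau> *s w)) 0"
    if "i < k" for i
    using higher_deriv_complex_poly_line_smult[OF Q_complex_poly[OF that], of 2] by simp
  define T where "T = (\<Sum>i<k. 2 * Re (cnj (Q i z) * (deriv ^^ 2) (\<lambda>\<tau>. Q i (z + \<tau> *s w)) 0)) / S z"
  txt \<open>The S-part of the Hessian changes sign under w \<mapsto> i w, so only the Fubini-Study
    part survives in the Levi form.\<close>
  have sum_rot: "(\<Sum>i<k. 2 * Re (cnj (Q i z) * (deriv ^^ 2) (\<lambda>\<tau>. Q i (z + \<tau> *s (\<i> *s w))) 0)) =
      - (\<Sum>i<k. 2 * Re (cnj (Q i z) * (deriv ^^ 2) (\<lambda>\<tau>. Q i (z + \<tau> *s w)) 0))"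
    unfolding sum_negf[symmetric] by (intro sum.cong refl) (subst rot, auto)
  have H_iw: "dderiv (dderiv F (\<i> *s w)) (\<i> *s w) z =
      real deg * ((2 * (w \<bullet> w) * (z \<bullet> z) - (2 * (z \<bullet> (\<i> *s w)))\<^sup>2) / (z \<bullet> z)\<^sup>2) + T"
    unfolding dderiv2_F[OF z crit_i] sum_rot T_def inner_smult_i_smult_i by simp
  have H_w: "dderiv (dderiv F w) w z =
      real deg * ((2 * (w \<bullet> w) * (z \<bullet> z) - (2 * (z \<bullet> w))\<^sup>2) / (z \<bullet> z)\<^sup>2) - T"
    unfolding dderiv2_F[OF z crit] T_def ..
  have CS: "(z \<bullet> w)\<^sup>2 + (z \<bullet> (\<i> *s w))\<^sup>2 < (w \<bullet> w) * (z \<bullet> z)"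
    using neq_smult_of_cdiff_Q_eq_0[OF z crit] by (intro complex_Cauchy_Schwarz_strict w)
  have zz: "z \<bullet> z > 0" using z mem_U_iff by simp
  have "Re (levi_form F z w) = (dderiv (dderiv F w) w z + dderiv (dderiv F (\<i> *s w)) (\<i> *s w) z) / 4"
    by (rule Re_levi_form_eq_dderiv2[OF bilinear_dderiv2[OF open_U log_rational_F z]])
  also have "\<dots> = real deg * ((w \<bullet> w) * (z \<bullet> z) - (z \<bullet> w)\<^sup>2 - (z \<bullet> (\<i> *s w))\<^sup>2) / (z \<bullet> z)\<^sup>2"
    unfolding H_w H_iw using zz by (simp add: field_simps power2_eq_square)
  finally show ?thesis
    using CS zz deg_pos by simp
qed

lemma strictly_psh_F: "strictly_psh (CARD('m) - k) U F"
  unfolding strictly_psh_def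
proof
  fix z assume z: "z \<in> U"
  define K where "K = {w. \<forall>i<k. cdiff (Q i) z w = 0}"
  have "vec.subspace K" "CARD('m) - k \<le> vec.dim K"
    unfolding K_def using dim_common_kernel[of k "\<lambda>i. cdiff (Q i) z"] linear_cdiff Q_complex_poly by auto
  then obtain E where "vec.subspace E" "E \<subseteq> K" "vec.dim E = CARD('m) - k"
    using vec.choose_subspace_of_subspace[of "CARD('m) - k" K] vec.span_eq_iff by metis
  then show "\<exists>E. vec.subspace E \<and> vec.dim E = CARD('m) - k \<and> (\<forall>v\<in>E. v \<noteq> 0 \<longrightarrow> 0 < Re (levi_form F z v))"
    using Re_levi_form_F_pos[OF z] unfolding K_def by blast
qed

end

theorem mainTheorem15:
  fixes P :: "nat \<Rightarrow> complex^'m \<Rightarrow> complex" and d :: "nat \<Rightarrow> nat" and k :: nat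
  assumes "\<And>i. i < k \<Longrightarrow> d i \<ge> 1 \<and> homog_poly (d i) (P i)"
  shows "(\<exists>f. proj_invariant (compl_cone k P) f \<and> Ck 2 (compl_cone k P) f \<and>
            strictly_psh (CARD('m) - k) (compl_cone k P) f \<and>
            proj_exhaustion (compl_cone k P) f)
       \<and> (k = 1 \<longrightarrow> (\<exists>f. proj_invariant (compl_cone k P) f \<and> smooth_fun (compl_cone k P) f \<and>
            strictly_psh (CARD('m) - 1) (compl_cone k P) f \<and>
            proj_exhaustion (compl_cone k P) f))"
proof -
  interpret homogeneous_system P d k using assms by unfold_locales
  have smooth: "smooth_fun (compl_cone k P) F"
    by (rule smooth_fun_log_rational[OF open_U log_rational_F])
  then have "Ck 2 (compl_cone k P) F" unfolding smooth_fun_def ..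
  with smooth proj_invariant_F strictly_psh_F proj_exhaustion_F show ?thesis by auto
qed

end
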